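(* Let $0<L<\infty$ and let $(T_f,T_s)$ be the unique solution on $[0,L]$ of the boundary value problem $$-\varphi\kappa_fT_f''+c_{p,f}\frac{\dot m_c}{A_c}T_f'=h_v(T_s-T_f),\qquad (1-\varphi)\kappa_sT_s''=h_v(T_s-T_f)\quad\text{on }(0,L),$$ $$T_f(0)=T_s(0)=T_b,\quad (1-\varphi)\kappa_sT_s'(L)=q_{HG}-c_{p,f}\frac{\dot m_c}{A_c}(T_s(L)-T_f(L)),\quad T_f'(L)=\frac{h_vA_c}{c_{p,f}\dot m_c}(T_s(L)-T_f(L)).$$ Then $T_s(y)\ge T_f(y)$ for all $y\in[0,L]$, and the two temperatures coincide if and only if $\gamma:=\frac{q_{HG}}{(1-\varphi)\kappa_s}=0$.
   Context: Parameters: $\varphi\in(0,1)$, $\kappa_f,\kappa_s,h_v,c_{p,f},\dot m_c,A_c>0$, $T_b\in\mathbb R$, $q_{HG}\ge 0$ (the heat flux from the hot gas; the paper's sign analysis treats the case $q_{HG}\ge0$). *)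

theory Defs
  imports Complex_Main
begin

end

theory Submission
  imports Defs
begin

(* With \<theta> = Ts - Tf, suppose min \<theta> = m < 0 is attained at x0. x0 = 0 is excluded by the inlet
   condition and x0 = L by the outlet conditions, which force \<theta>'(L) > 0. For an interior x0 the
   fluid equation reads (c Tf' - h m)' \<le> (c/a) (c Tf' - h m) on [x0, L] and c Tf'(L) - h m \<ge> 0,
   so c Tf'(x0) \<ge> h m by a backward Gronwall argument; hence Tf''(x0) \<ge> 0 > Ts''(x0), i.e.
   \<theta>''(x0) < 0, which contradicts the minimum. If \<theta> vanishes identically, the outlet conditions
   give q = 0; conversely, for q = 0 the system is invariant under negation, so -\<theta> \<ge> 0 too. *)

lemma has_real_derivative_nonpos_at_right_min:
  fixes f :: "real \<Rightarrow> real"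
  assumes "a < b"
    and deriv: "(f has_real_derivative D) (at b within {a..b})"
    and min: "\<And>x. x \<in> {a..b} \<Longrightarrow> f b \<le> f x"
  shows "D \<le> 0"
proof (rule ccontr)
  assume "\<not> D \<le> 0"
  then obtain d where "d > 0" and d: "\<And>h. h > 0 \<Longrightarrow> b - h \<in> {a..b} \<Longrightarrow> h < d \<Longrightarrow> f (b - h) < f b"
    using has_real_derivative_pos_inc_left[OF deriv] by auto
  define h where "h = min d (b - a) / 2"
  have "h > 0" "b - h \<in> {a..b}" "h < d"
    using \<open>a < b\<close> \<open>d > 0\<close> by (auto simp: h_def min_def field_simps)
  with d min show False by force
qed

lemma DERIV_local_min_second_deriv_nonneg:
  fixes f f' :: "real \<Rightarrow> real"
  assumes "a < x" "x < b"
    and deriv: "\<And>y. a < y \<Longrightarrow> y < b \<Longrightarrow> DERIV f y :> f' y"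
    and deriv2: "DERIV f' x :> l"
    and min: "\<And>y. a < y \<Longrightarrow> y < b \<Longrightarrow> f x \<le> f y"
  shows "0 \<le> l"
proof (rule ccontr)
  assume "\<not> 0 \<le> l"
  have "f' x = 0"
  proof (rule DERIV_local_min)
    show "DERIV f x :> f' x" using deriv assms(1,2) .
    show "0 < min (x - a) (b - x)" using assms(1,2) by simp
    show "\<forall>y. \<bar>x - y\<bar> < min (x - a) (b - x) \<longrightarrow> f x \<le> f y"
      by (auto simp: abs_less_iff intro!: min)
  qed
  obtain d where "d > 0" and d: "\<And>h. h > 0 \<Longrightarrow> h < d \<Longrightarrow> f' (x + h) < f' x"
    using DERIV_neg_dec_right[OF deriv2] \<open>\<not> 0 \<le> l\<close> by auto
  define e where "e = min d (b - x) / 2"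
  have e: "0 < e" "e < d" "x + e < b"
    using \<open>d > 0\<close> \<open>x < b\<close> by (auto simp: e_def min_def field_simps)
  have "f (x + e) < f x"
  proof (rule DERIV_neg_imp_decreasing_open[where f = f])
    fix t assume "x < t" "t < x + e"
    then show "\<exists>y. DERIV f t :> y \<and> y < 0"
      using deriv[of t] d[of "t - x"] \<open>f' x = 0\<close> e assms(1) by auto
  next
    show "continuous_on {x..x + e} f"
      using e assms(1) by (intro continuous_at_imp_continuous_on ballI DERIV_isCont[OF deriv]) auto
  qed (use e in simp)
  with min[of "x + e"] e assms(1) show False by simp
qed

lemma nonneg_if_deriv_le_linear_and_nonneg_at_right:
  fixes g g' :: "real \<Rightarrow> real"
  assumes "s \<le> t"
    and cont: "continuous_on {s..t} g"
    and deriv: "\<And>y. s < y \<Longrightarrow> y < t \<Longrightarrow> DERIV g y :> g' y"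
    and growth: "\<And>y. s < y \<Longrightarrow> y < t \<Longrightarrow> g' y \<le> k * g y"
    and "0 \<le> g t"
  shows "0 \<le> g s"
proof -
  have "exp (- k * t) * g t \<le> exp (- k * s) * g s"
  proof (rule DERIV_nonpos_imp_decreasing_open[OF \<open>s \<le> t\<close>])
    fix y assume y: "s < y" "y < t"
    have "DERIV (\<lambda>y. exp (- k * y) * g y) y :> exp (- k * y) * (g' y - k * g y)"
      by (auto intro!: derivative_eq_intros deriv y simp: algebra_simps)
    moreover have "exp (- k * y) * (g' y - k * g y) \<le> 0"
      using growth[OF y] by (simp add: mult_nonneg_nonpos)
    ultimately show "\<exists>D. DERIV (\<lambda>y. exp (- k * y) * g y) y :> D \<and> D \<le> 0" by blast
  qed (intro continuous_intros cont)
  moreover have "0 \<le> exp (- k * t) * g t" using \<open>0 \<le> g t\<close> by simp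
  ultimately have "0 \<le> exp (- k * s) * g s" by linarith
  then show ?thesis by (simp add: zero_le_mult_iff)
qed

locale heat_exchange_bvp =
  fixes a b c h q L :: real
    and Tf Ts Tf' Ts' Tf'' Ts'' :: "real \<Rightarrow> real"
  assumes pos: "0 < a" "0 < b" "0 < c" "0 < h" "0 < L"
    and dTf: "\<And>y. y \<in> {0..L} \<Longrightarrow> (Tf has_real_derivative Tf' y) (at y within {0..L})"
    and dTs: "\<And>y. y \<in> {0..L} \<Longrightarrow> (Ts has_real_derivative Ts' y) (at y within {0..L})"
    and cTf': "continuous_on {0..L} Tf'"
    and cTs': "continuous_on {0..L} Ts'"
    and ddTf: "\<And>y. y \<in> {0<..<L} \<Longrightarrow> (Tf' has_real_derivative Tf'' y) (at y)"
    and ddTs: "\<And>y. y \<in> {0<..<L} \<Longrightarrow> (Ts' has_real_derivative Ts'' y) (at y)"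
    and fluid_eq: "\<And>y. y \<in> {0<..<L} \<Longrightarrow> - a * Tf'' y + c * Tf' y = h * (Ts y - Tf y)"
    and solid_eq: "\<And>y. y \<in> {0<..<L} \<Longrightarrow> b * Ts'' y = h * (Ts y - Tf y)"
    and inlet: "Tf 0 = Ts 0"
    and solid_outlet: "b * Ts' L = q - c * (Ts L - Tf L)"
    and fluid_outlet: "c * Tf' L = h * (Ts L - Tf L)"
begin

lemma uminus:
  "heat_exchange_bvp a b c h (- q) L (\<lambda>y. - Tf y) (\<lambda>y. - Ts y)
     (\<lambda>y. - Tf' y) (\<lambda>y. - Ts' y) (\<lambda>y. - Tf'' y) (\<lambda>y. - Ts'' y)"
proof unfold_locales
  fix y assume y: "y \<in> {0<..<L}"
  show "- a * - Tf'' y + c * - Tf' y = h * (- Ts y - - Tf y)"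
    using fluid_eq[OF y] by (simp add: algebra_simps)
  show "b * - Ts'' y = h * (- Ts y - - Tf y)"
    using solid_eq[OF y] by (simp add: algebra_simps)
next
  show "b * - Ts' L = - q - c * (- Ts L - - Tf L)"
    using solid_outlet by (simp add: algebra_simps)
  show "c * - Tf' L = h * (- Ts L - - Tf L)"
    using fluid_outlet by (simp add: algebra_simps)
qed (use pos inlet in \<open>auto intro!: derivative_intros continuous_intros dTf dTs cTf' cTs' ddTf ddTs\<close>)

lemma gap_has_derivative:
  "y \<in> {0..L} \<Longrightarrow> ((\<lambda>y. Ts y - Tf y) has_real_derivative Ts' y - Tf' y) (at y within {0..L})"
  by (intro derivative_intros dTs dTf)

lemma gap_has_derivative_interior:
  "y \<in> {0<..<L} \<Longrightarrow> DERIV (\<lambda>y. Ts y - Tf y) y :> Ts' y - Tf' y"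
  using gap_has_derivative[of y] by (simp add: at_within_Icc_at)

lemma gap_continuous: "continuous_on {0..L} (\<lambda>y. Ts y - Tf y)"
  by (intro continuous_intros DERIV_continuous_on[OF dTs] DERIV_continuous_on[OF dTf])

lemma outlet_gap_derivative:
  "b * c * (Ts' L - Tf' L) = c * q - (c * c + b * h) * (Ts L - Tf L)"
proof -
  have "b * c * (Ts' L - Tf' L) = c * (b * Ts' L) - b * (c * Tf' L)"
    by (simp add: algebra_simps)
  then show ?thesis
    unfolding solid_outlet fluid_outlet by (simp add: algebra_simps)
qed

lemma gap_min_at_outlet_nonneg:
  assumes "0 \<le> q" and min: "\<And>y. y \<in> {0..L} \<Longrightarrow> Ts L - Tf L \<le> Ts y - Tf y"
  shows "0 \<le> Ts L - Tf L"
proof (rule ccontr)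
  assume neg: "\<not> 0 \<le> Ts L - Tf L"
  have "Ts' L - Tf' L \<le> 0"
    using has_real_derivative_nonpos_at_right_min[OF _ gap_has_derivative min] pos by auto
  then have "b * c * (Ts' L - Tf' L) \<le> 0"
    using pos by (simp add: mult_nonneg_nonpos)
  moreover have "(c * c + b * h) * (Ts L - Tf L) < 0"
    using neg pos by (intro mult_pos_neg) (auto intro: add_pos_pos)
  moreover have "0 \<le> c * q"
    using \<open>0 \<le> q\<close> pos by simp
  ultimately show False
    using outlet_gap_derivative by linarith
qed

lemma fluid_flux_ge_gap_bound:
  assumes x0: "x0 \<in> {0<..<L}"
    and bound: "\<And>y. y \<in> {x0..L} \<Longrightarrow> m \<le> Ts y - Tf y"
  shows "h * m \<le> c * Tf' x0"
proof -
  have "0 \<le> c * Tf' x0 - h * m"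
  proof (rule nonneg_if_deriv_le_linear_and_nonneg_at_right
      [where g = "\<lambda>y. c * Tf' y - h * m" and g' = "\<lambda>y. c * Tf'' y" and k = "c / a"])
    show "continuous_on {x0..L} (\<lambda>y. c * Tf' y - h * m)"
      using x0 by (intro continuous_intros continuous_on_subset[OF cTf']) auto
  next
    fix y assume y: "x0 < y" "y < L"
    then have y': "y \<in> {0<..<L}" using x0 by auto
    show "DERIV (\<lambda>y. c * Tf' y - h * m) y :> c * Tf'' y"
      by (auto intro!: derivative_eq_intros ddTf y')
    have "c * Tf'' y = c / a * (a * Tf'' y)"
      using pos by simp
    also have "a * Tf'' y = c * Tf' y - h * (Ts y - Tf y)"
      using fluid_eq[OF y'] by simp
    also have "c / a * (c * Tf' y - h * (Ts y - Tf y)) \<le> c / a * (c * Tf' y - h * m)"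
      using bound[of y] y pos by (intro mult_left_mono) (auto simp: mult_left_mono)
    finally show "c * Tf'' y \<le> c / a * (c * Tf' y - h * m)" .
  next
    show "0 \<le> c * Tf' L - h * m"
      using fluid_outlet bound[of L] x0 pos by (simp add: right_diff_distrib[symmetric])
  qed (use x0 in auto)
  then show ?thesis by simp
qed

lemma gap_min_interior_nonneg:
  assumes x0: "x0 \<in> {0<..<L}" and min: "\<And>y. y \<in> {0..L} \<Longrightarrow> Ts x0 - Tf x0 \<le> Ts y - Tf y"
  shows "0 \<le> Ts x0 - Tf x0"
proof (rule ccontr)
  assume neg: "\<not> 0 \<le> Ts x0 - Tf x0"
  have "h * (Ts x0 - Tf x0) \<le> c * Tf' x0"
    by (rule fluid_flux_ge_gap_bound[OF x0 min]) (use x0 in auto)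
  then have "0 \<le> a * Tf'' x0"
    using fluid_eq[OF x0] by simp
  then have Tf''_nonneg: "0 \<le> Tf'' x0"
    using pos by (simp add: zero_le_mult_iff)
  have "b * Ts'' x0 < 0"
    using solid_eq[OF x0] neg pos by (simp add: mult_pos_neg)
  then have "Ts'' x0 < 0"
    using pos by (simp add: mult_less_0_iff)
  moreover have "0 \<le> Ts'' x0 - Tf'' x0"
  proof (rule DERIV_local_min_second_deriv_nonneg[of 0 x0 L "\<lambda>y. Ts y - Tf y"])
    show "DERIV (\<lambda>y. Ts' y - Tf' y) x0 :> Ts'' x0 - Tf'' x0"
      using ddTs[OF x0] ddTf[OF x0] by (rule DERIV_diff)
  qed (use x0 min in \<open>auto intro: gap_has_derivative_interior\<close>)
  ultimately show False
    using Tf''_nonneg by simp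
qed

theorem fluid_le_solid:
  assumes "0 \<le> q" and y: "y \<in> {0..L}"
  shows "Tf y \<le> Ts y"
proof -
  obtain x0 where x0: "x0 \<in> {0..L}" and min: "\<And>y. y \<in> {0..L} \<Longrightarrow> Ts x0 - Tf x0 \<le> Ts y - Tf y"
    using continuous_attains_inf[OF compact_Icc _ gap_continuous] pos by auto
  consider "x0 = 0" | "x0 = L" | "x0 \<in> {0<..<L}" using x0 by force
  then have "0 \<le> Ts x0 - Tf x0"
  proof cases
    case 1 then show ?thesis using inlet by simp
  next
    case 2 then show ?thesis using gap_min_at_outlet_nonneg \<open>0 \<le> q\<close> min by simp
  next
    case 3 then show ?thesis using gap_min_interior_nonneg min by simp
  qed
  with min[OF y] show ?thesis by simp
qed

lemma q_eq_0_if_gap_vanishes: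
  assumes zero: "\<And>y. y \<in> {0..L} \<Longrightarrow> Ts y = Tf y"
  shows "q = 0"
proof -
  have "Ts' L - Tf' L \<le> 0"
    by (rule has_real_derivative_nonpos_at_right_min[OF _ gap_has_derivative]) (use zero pos in auto)
  moreover have "- (Ts' L - Tf' L) \<le> 0"
    by (rule has_real_derivative_nonpos_at_right_min[OF _ DERIV_minus[OF gap_has_derivative]])
       (use zero pos in auto)
  ultimately have "Ts' L - Tf' L = 0" by simp
  then show ?thesis
    using outlet_gap_derivative zero[of L] pos by simp
qed

theorem gap_vanishes_iff:
  assumes "0 \<le> q"
  shows "(\<forall>y \<in> {0..L}. Ts y = Tf y) \<longleftrightarrow> q = 0"
proof
  assume "q = 0"
  then have "- Tf y \<le> - Ts y" if "y \<in> {0..L}" for y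
    using heat_exchange_bvp.fluid_le_solid[OF uminus] that by simp
  then show "\<forall>y \<in> {0..L}. Ts y = Tf y"
    using fluid_le_solid \<open>0 \<le> q\<close> by force
qed (use q_eq_0_if_gap_vanishes in auto)

end

theorem lemma3:
  fixes \<phi> \<kappa>f \<kappa>s hv cpf mc Ac Tb qHG L :: real
    and Tf Ts Tf' Ts' Tf'' Ts'' :: "real \<Rightarrow> real"
  assumes phi: "0 < \<phi>" "\<phi> < 1"
    and pos: "0 < \<kappa>f" "0 < \<kappa>s" "0 < hv" "0 < cpf" "0 < mc" "0 < Ac"
    and q: "0 \<le> qHG"
    and L: "0 < L"
    and dTf: "\<And>y. y \<in> {0..L} \<Longrightarrow> (Tf has_real_derivative Tf' y) (at y within {0..L})"
    and dTs: "\<And>y. y \<in> {0..L} \<Longrightarrow> (Ts has_real_derivative Ts' y) (at y within {0..L})"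
    and cTf': "continuous_on {0..L} Tf'"
    and cTs': "continuous_on {0..L} Ts'"
    and ddTf: "\<And>y. y \<in> {0<..<L} \<Longrightarrow> (Tf' has_real_derivative Tf'' y) (at y)"
    and ddTs: "\<And>y. y \<in> {0<..<L} \<Longrightarrow> (Ts' has_real_derivative Ts'' y) (at y)"
    and eqf: "\<And>y. y \<in> {0<..<L} \<Longrightarrow>
               - \<phi> * \<kappa>f * Tf'' y + cpf * (mc / Ac) * Tf' y = hv * (Ts y - Tf y)"
    and eqs: "\<And>y. y \<in> {0<..<L} \<Longrightarrow>
               (1 - \<phi>) * \<kappa>s * Ts'' y = hv * (Ts y - Tf y)"
    and bc0: "Tf 0 = Tb" "Ts 0 = Tb"
    and bcLs: "(1 - \<phi>) * \<kappa>s * Ts' L = qHG - cpf * (mc / Ac) * (Ts L - Tf L)"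
    and bcLf: "Tf' L = (hv * Ac) / (cpf * mc) * (Ts L - Tf L)"
  shows "(\<forall>y \<in> {0..L}. Ts y \<ge> Tf y) \<and>
         ((\<forall>y \<in> {0..L}. Ts y = Tf y) \<longleftrightarrow> qHG / ((1 - \<phi>) * \<kappa>s) = 0)"
proof -
  have flux_eq_0_iff: "qHG / ((1 - \<phi>) * \<kappa>s) = 0 \<longleftrightarrow> qHG = 0"
    using phi pos by simp
  interpret heat_exchange_bvp "\<phi> * \<kappa>f" "(1 - \<phi>) * \<kappa>s" "cpf * (mc / Ac)" hv qHG L
    Tf Ts Tf' Ts' Tf'' Ts''
  proof
    show "cpf * (mc / Ac) * Tf' L = hv * (Ts L - Tf L)"
      using bcLf pos by (simp add: field_simps)
  qed (use phi pos L dTf dTs cTf' cTs' ddTf ddTs eqf eqs bc0 bcLs in auto)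
  show ?thesis
    using fluid_le_solid gap_vanishes_iff q flux_eq_0_iff by auto
qed

end
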